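(* There is no trajectory $(x,y,z)(\eta_1)$ of system (S2) such that, for some $\eta_{1,*}\in\mathbb{R}$, $x(\eta_1)>0$, $z(\eta_1)>0$, $y(\eta_1)<0$ for all $\eta_1>\eta_{1,*}$, and $$z(\eta_1)\to\infty,\qquad \frac{z(\eta_1)}{x(\eta_1)}\to\infty,\qquad \frac{y(\eta_1)}{z(\eta_1)}\to0,\qquad \eta_1\to\infty$$ (i.e. no trajectory enters the critical point at infinity $Q_4$ from the region $\{x>0,z>0,y<0\}$).
   Context: Let $N\geq1$, $m>1$, $\sigma>0$, $p>m$, $L=\sigma(m-1)+2(p-1)$, $\alpha=(\sigma+2)/L$, $\beta=(p-m)/L$. Positive profiles $f$ solve $(f^m)''+\frac{N-1}{\xi}(f^m)'+\alpha f+\beta\xi f'-\xi^\sigma f^p=0$. Setting $x=\frac{\alpha}{m}\xi^2f^{1-m}$, $y=\xi f'/f$, $z=\frac1m\xi^{\sigma+2}f^{p-m}$, $\eta_1=\ln\xi$, $(x,y,z)$ solves the autonomous system (S2): $$\dot x=x(2-(m-1)y),\quad \dot y=-x-(N-2)y+z-my^2-\tfrac{p-m}{\sigma+2}xy,\quad \dot z=z(\sigma+2+(p-m)y).$$ *)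

theory Defs
  imports "HOL-Analysis.Analysis"
begin

definition S2_at :: "real \<Rightarrow> real \<Rightarrow> real \<Rightarrow> real \<Rightarrow> (real \<Rightarrow> real) \<Rightarrow> (real \<Rightarrow> real) \<Rightarrow> (real \<Rightarrow> real) \<Rightarrow> real \<Rightarrow> bool" where
  "S2_at N m \<sigma> p x y z t \<longleftrightarrow>
     (x has_real_derivative x t * (2 - (m - 1) * y t)) (at t) \<and>
     (y has_real_derivative
        (- x t - (N - 2) * y t + z t - m * (y t)\<^sup>2 - (p - m) / (\<sigma> + 2) * x t * y t)) (at t) \<and>
     (z has_real_derivative z t * (\<sigma> + 2 + (p - m) * y t)) (at t)"

end

theory Submission
  imports Defs
begin

text \<open>
  Put \<open>K = (\<sigma>+2)/(p-m)\<close>, so that \<open>z\<close> grows exactly when \<open>y > -K\<close>.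
  Once \<open>z\<close> and \<open>z/x\<close> are large, the right-hand side of the \<open>y\<close>-equation is at least 1
  wherever \<open>-K \<le> y < 0\<close>: the term \<open>z\<close> dominates \<open>x\<close> and the bounded terms in \<open>y\<close>.
  Since \<open>z \<rightarrow> \<infinity>\<close>, \<open>y\<close> cannot stay below \<open>-K\<close> for ever; once above \<open>-K\<close> it increases
  with slope at least 1, hence becomes positive within time \<open>K + 1\<close>, contradicting \<open>y < 0\<close>.
\<close>

lemma continuous_on_first_le:
  fixes f :: "real \<Rightarrow> real"
  assumes "continuous_on {a..b} f" "u0 \<in> {a..b}" "f u0 \<le> c"
  obtains u where "u \<in> {a..b}" "f u \<le> c" "\<And>v. v \<in> {a..b} \<Longrightarrow> v < u \<Longrightarrow> f v > c"
proof -
  let ?S = "{a..b} \<inter> f -` {..c}"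
  have "closed ?S"
    by (rule continuous_closed_preimage[OF assms(1)]) auto
  then have "compact ?S"
    by (simp add: compact_eq_bounded_closed bounded_Int)
  moreover have "?S \<noteq> {}"
    using assms(2,3) by auto
  ultimately obtain u where u: "u \<in> ?S" "\<forall>t\<in>?S. u \<le> t"
    by (rule compact_attains_inf[THEN bexE])
  show thesis
  proof (rule that)
    fix v
    assume "v \<in> {a..b}" "v < u"
    then have "v \<notin> ?S"
      using u(2) by (meson not_le)
    with \<open>v \<in> {a..b}\<close> show "f v > c"
      by simp
  qed (use u(1) in simp_all)
qed

lemma growth_while_above_level:
  fixes f f' :: "real \<Rightarrow> real"
  assumes "a \<le> b"
    and deriv: "\<And>v. v \<in> {a..b} \<Longrightarrow> (f has_real_derivative f' v) (at v)"
    and slope: "\<And>v. v \<in> {a..b} \<Longrightarrow> f v > c \<Longrightarrow> f' v \<ge> d"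
    and "d \<ge> 0" "f a > c"
  shows "f b \<ge> f a + d * (b - a)"
proof -
  have mvt: "\<exists>\<xi>. a < \<xi> \<and> \<xi> < u \<and> f u - f a = (u - a) * f' \<xi>" if "a < u" "u \<le> b" for u
    by (rule MVT2) (use that deriv in auto)
  have cont: "continuous_on {a..b} f"
    using deriv by (intro continuous_at_imp_continuous_on ballI DERIV_isCont) blast
  have above: "f v > c" if v: "v \<in> {a..b}" for v
  proof (rule ccontr)
    assume "\<not> f v > c"
    then have "f v \<le> c"
      by simp
    obtain u where u: "u \<in> {a..b}" "f u \<le> c" "\<And>w. w \<in> {a..b} \<Longrightarrow> w < u \<Longrightarrow> f w > c"
      using continuous_on_first_le[OF cont v \<open>f v \<le> c\<close>] by blast
    with \<open>f a > c\<close> have "a < u"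
      by (metis atLeastAtMost_iff le_less not_le)
    then obtain \<xi> where \<xi>: "a < \<xi>" "\<xi> < u" "f u - f a = (u - a) * f' \<xi>"
      using mvt u(1) by auto
    have "\<xi> \<in> {a..b}"
      using \<xi> u(1) by simp
    with u(3) \<xi>(2) have "f' \<xi> \<ge> 0"
      using slope \<open>d \<ge> 0\<close> by force
    with \<open>a < u\<close> have "(u - a) * f' \<xi> \<ge> 0"
      by simp
    then have "f u \<ge> f a"
      using \<xi>(3) by linarith
    then show False
      using u(2) \<open>f a > c\<close> by linarith
  qed
  show ?thesis
  proof (cases "a = b")
    case False
    with \<open>a \<le> b\<close> have "a < b"
      by simp
    then obtain \<xi> where \<xi>: "a < \<xi>" "\<xi> < b" "f b - f a = (b - a) * f' \<xi>"
      using mvt[OF _ order_refl] by blast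
    then have "f' \<xi> \<ge> d"
      using slope above by simp
    then have "(b - a) * f' \<xi> \<ge> d * (b - a)"
      using \<xi> by (simp add: mult.commute mult_left_mono)
    with \<xi>(3) show ?thesis
      by linarith
  qed simp
qed

lemma unbounded_growth_rate_somewhere_pos:
  fixes z g :: "real \<Rightarrow> real"
  assumes "filterlim z at_top at_top"
    and "\<And>t. t \<ge> T \<Longrightarrow> (z has_real_derivative z t * g t) (at t)"
    and "\<And>t. t \<ge> T \<Longrightarrow> z t > 0"
  shows "\<exists>t\<ge>T. g t > 0"
proof (rule ccontr)
  assume "\<not> ?thesis"
  then have rate_nonpos: "g s \<le> 0" if "s \<ge> T" for s
    using that by (simp add: not_less)
  have "z t \<le> z T" if "t \<ge> T" for t
  proof (rule DERIV_nonpos_imp_nonincreasing[OF that])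
    fix s assume "T \<le> s"
    with rate_nonpos assms(2,3) show "\<exists>y. (z has_real_derivative y) (at s) \<and> y \<le> 0"
      by (intro exI[of _ "z s * g s"]) (simp add: mult_nonneg_nonpos less_imp_le)
  qed
  moreover obtain t where "t \<ge> T" "z t > z T"
  proof -
    have "\<forall>\<^sub>F t in at_top. t \<ge> T \<and> z t > z T"
      using eventually_ge_at_top[of T] filterlim_at_top_dense[THEN iffD1, OF assms(1)]
      by (simp add: eventually_conj)
    then obtain t' where "\<And>t. t \<ge> t' \<Longrightarrow> t \<ge> T \<and> z t > z T"
      unfolding eventually_at_top_linorder by blast
    then show thesis
      using that by blast
  qed
  ultimately show False
    by fastforce
qed

lemma S2_y_rhs_ge_one:
  fixes N :: nat and m c K X Y Z :: real
  assumes "N \<ge> 1" "m > 0" "c > 0" "X > 0" "Y < 0" "-K \<le> Y"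
    and "Z \<ge> 2 * (1 + K + m * K\<^sup>2)" "Z / X \<ge> 2"
  shows "- X - (real N - 2) * Y + Z - m * Y\<^sup>2 - c * X * Y \<ge> 1"
proof -
  have "Z \<ge> 2 * X"
    using assms(4,8) by (simp add: field_simps)
  moreover have "- (real N - 2) * Y \<ge> -K"
  proof (cases "N = 1")
    case False
    with assms(1) have "real N - 2 \<ge> 0"
      by simp
    with assms(5) have "(real N - 2) * Y \<le> 0"
      by (simp add: mult_nonneg_nonpos)
    with assms(5,6) show ?thesis
      by linarith
  qed (use assms(6) in simp)
  moreover have "m * Y\<^sup>2 \<le> m * K\<^sup>2"
    using assms(2,5,6) power_mono[of "-Y" K 2] by simp
  moreover have "c * X * Y \<le> 0"
    using assms(3,4,5) by (simp add: mult_nonneg_nonpos)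
  ultimately show ?thesis
    using assms(7) by argo
qed

theorem lemma2p8:
  fixes N :: nat and m \<sigma> p :: real
  assumes "N \<ge> 1" and "m > 1" and "\<sigma> > 0" and "p > m"
  shows "\<not> (\<exists>(x::real\<Rightarrow>real) (y::real\<Rightarrow>real) (z::real\<Rightarrow>real) (t0::real).
            (\<forall>t>t0. S2_at (real N) m \<sigma> p x y z t) \<and>
            (\<forall>t>t0. x t > 0 \<and> z t > 0 \<and> y t < 0) \<and>
            filterlim z at_top at_top \<and>
            filterlim (\<lambda>t. z t / x t) at_top at_top \<and>
            ((\<lambda>t. y t / z t) \<longlongrightarrow> 0) at_top)"
proof
  assume "\<exists>x y z t0. (\<forall>t>t0. S2_at (real N) m \<sigma> p x y z t) \<and>
            (\<forall>t>t0. x t > 0 \<and> z t > 0 \<and> y t < 0) \<and>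
            filterlim z at_top at_top \<and> filterlim (\<lambda>t. z t / x t) at_top at_top \<and>
            ((\<lambda>t. y t / z t) \<longlongrightarrow> 0) at_top"
  then obtain x y z t0 where S2: "\<And>t. t > t0 \<Longrightarrow> S2_at (real N) m \<sigma> p x y z t"
    and sign: "\<And>t. t > t0 \<Longrightarrow> x t > 0 \<and> z t > 0 \<and> y t < 0"
    and z_lim: "filterlim z at_top at_top" and zx_lim: "filterlim (\<lambda>t. z t / x t) at_top at_top"
    by blast
  define K where "K = (\<sigma> + 2) / (p - m)"
  define y' where "y' t = - x t - (real N - 2) * y t + z t - m * (y t)\<^sup>2 - (p - m) / (\<sigma> + 2) * x t * y t"
    for t
  have "K > 0"
    using assms unfolding K_def by simp
  have "\<forall>\<^sub>F t in at_top. t > t0 \<and> z t \<ge> 2 * (1 + K + m * K\<^sup>2) \<and> z t / x t \<ge> 2"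
    using eventually_gt_at_top[of t0] filterlim_at_top[THEN iffD1, OF z_lim, rule_format]
      filterlim_at_top[THEN iffD1, OF zx_lim, rule_format]
    by eventually_elim auto
  then obtain T where T: "\<And>t. t \<ge> T \<Longrightarrow> t > t0 \<and> z t \<ge> 2 * (1 + K + m * K\<^sup>2) \<and> z t / x t \<ge> 2"
    unfolding eventually_at_top_linorder by blast
  have "\<exists>t\<ge>T. \<sigma> + 2 + (p - m) * y t > 0"
  proof (rule unbounded_growth_rate_somewhere_pos[OF z_lim])
    fix t
    assume "t \<ge> T"
    with T have "t > t0"
      by blast
    then show "(z has_real_derivative z t * (\<sigma> + 2 + (p - m) * y t)) (at t)" "z t > 0"
      using S2 sign unfolding S2_at_def by blast+
  qed
  then obtain t1 where t1: "t1 \<ge> T" "y t1 > -K"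
    using assms(4) by (auto simp: K_def field_simps)
  have "y (t1 + K + 1) \<ge> y t1 + 1 * (t1 + K + 1 - t1)"
  proof (rule growth_while_above_level[where f' = y' and c = "-K"])
    fix v
    assume "v \<in> {t1..t1 + K + 1}"
    with t1(1) T[of v] have v: "v > t0" "z v \<ge> 2 * (1 + K + m * K\<^sup>2)" "z v / x v \<ge> 2"
      by auto
    then show "(y has_real_derivative y' v) (at v)"
      using S2 unfolding S2_at_def y'_def by blast
    assume "y v > -K"
    with v sign[of v] assms show "y' v \<ge> 1"
      unfolding y'_def by (intro S2_y_rhs_ge_one) auto
  qed (use \<open>K > 0\<close> t1 in auto)
  moreover have "y (t1 + K + 1) < 0"
    using sign T[of "t1 + K + 1"] t1(1) \<open>K > 0\<close> by simp
  ultimately show False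
    using t1(2) by simp
qed

end
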